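(* Let $Q:\mathbb{R}_{\ge0}\to\overline{\mathcal Q}_n$ be Riemann-integrable and sufficiently exciting. Then every solution of the linear system $\dot x=-Q_tx$ satisfies $\lim_{t\to\infty}x(t)=0$.
   Context: $\sigma_{\min}$ smallest singular value; $\mathcal Q_n$ symmetric positive semidefinite $n\times n$ matrices; $\overline{\mathcal Q}_n=\{R\in\mathcal Q_n:|R|\le1\}$ with $|\cdot|$ the induced 2-norm. Let $\delta(\varepsilon,T):=\min\{\varepsilon/2,\varepsilon^3/(240T^5)\}$. $Q:\mathbb{R}_{\ge0}\to\mathcal Q_n$ is sufficiently exciting if there is a sequence $(\varepsilon_i,T_i)_{i\ge1}$ of pairs of positive reals with $\sigma_{\min}\big(\int_{t_i}^{t_i+T_i}Q_t\,dt\big)\ge\varepsilon_i$, where $t_1=0$, $t_i=\sum_{j<i}T_j$, and $\sum_{i=1}^\infty\delta(\varepsilon_i,T_i)=\infty$. *)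

theory Defs
  imports "HOL-Analysis.Analysis"
begin

definition psd_sym :: "real^'n^'n \<Rightarrow> bool" where
  "psd_sym A \<longleftrightarrow> transpose A = A \<and> (\<forall>v. 0 \<le> v \<bullet> (A *v v))"

definition Qbar :: "(real^'n^'n) set" where
  "Qbar = {A. psd_sym A \<and> onorm (\<lambda>v. A *v v) \<le> 1}"

definition sigma_min :: "real^'n^'n \<Rightarrow> real" where
  "sigma_min A = sqrt (Inf {l. \<exists>v. v \<noteq> 0 \<and> (transpose A ** A) *v v = l *\<^sub>R v})"

text \<open>Riemann integrability on a compact interval, defined via Riemann sums over
  tagged divisions of uniformly small mesh (constant gauge).\<close>
definition riemann_integrable_on :: "(real \<Rightarrow> 'a::real_normed_vector) \<Rightarrow> real \<Rightarrow> real \<Rightarrow> bool" where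
  "riemann_integrable_on f a b \<longleftrightarrow> (\<exists>I. \<forall>e>0. \<exists>d>0. \<forall>p.
      p tagged_division_of {a..b} \<and> (\<lambda>x. ball x d) fine p \<longrightarrow>
      norm ((\<Sum>(x,K)\<in>p. measure lborel K *\<^sub>R f x) - I) < e)"

definition delta_fn :: "real \<Rightarrow> real \<Rightarrow> real" where
  "delta_fn e T = min (e / 2) (e ^ 3 / (240 * T ^ 5))"

text \<open>Sufficient excitation; sequences are indexed from 0 (i = 0 corresponds to i = 1
  in the paper), t_i = sum of T_j for j < i.\<close>
definition sufficiently_exciting :: "(real \<Rightarrow> real^'n^'n) \<Rightarrow> bool" where
  "sufficiently_exciting Q \<longleftrightarrow> (\<exists>eps T :: nat \<Rightarrow> real.
      (\<forall>i. 0 < eps i \<and> 0 < T i \<and>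
         eps i \<le> sigma_min (integral {(\<Sum>j<i. T j)..(\<Sum>j<i. T j) + T i} Q)) \<and>
      \<not> summable (\<lambda>i. delta_fn (eps i) (T i)))"

text \<open>Solution of x' = -Q_t x on [0,oo) (Caratheodory sense, integral equation).\<close>
definition is_solution :: "(real \<Rightarrow> real^'n^'n) \<Rightarrow> (real \<Rightarrow> real^'n) \<Rightarrow> bool" where
  "is_solution Q x \<longleftrightarrow> continuous_on {0..} x \<and>
     (\<forall>t\<ge>0. (\<lambda>s. Q s *v x s) integrable_on {0..t} \<and>
              x t = x 0 - integral {0..t} (\<lambda>s. Q s *v x s))"

end

theory Submission
  imports Defs
begin

(* The energy |x|^2 is nonincreasing: |x a|^2 - |x b|^2 = 2 * integral {a..b} (x . Q x). As x is only
   known through the integral equation, this identity is obtained by showing that the defect in it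
   has increments of order (w - u)^2 on [u, w], hence is constant.
   On an excitation window [a, a + T] with M = integral Q, sigma_min M >= e and P = integral (x . Q x),
   the bound |Q x|^2 <= x . Q x gives |x s - x a|^2 <= T * P, and the quadratic form of each Q s
   satisfies q(u + d) <= 2 q(u) + 2 q(d); hence e |x a|^2 <= x a . M (x a) <= 2 (1 + T^2) P.
   Since e <= T, this yields |x (a + T)|^2 <= (1 - delta(e, T)) |x a|^2. Along the consecutive windows
   the energy is bounded by exp (- sum delta_i) |x 0|^2, which tends to 0 when the delta_i are not
   summable, and monotonicity of the energy finishes the proof. *)

lemma symmetric_matrix_inner_commute:
  fixes A :: "real^'n^'n"
  assumes "transpose A = A"
  shows "(A *v u) \<bullet> v = u \<bullet> (A *v v)"
proof -
  have "(A *v u) \<bullet> v = (transpose A *v u) \<bullet> v" using assms by simp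
  also have "\<dots> = u \<bullet> (A *v v)" by (simp add: dot_lmul_matrix)
  finally show ?thesis .
qed

lemma Qbar_transpose: "A \<in> Qbar \<Longrightarrow> transpose A = A"
  unfolding Qbar_def psd_sym_def by auto

lemma Qbar_quadratic_nonneg: "A \<in> Qbar \<Longrightarrow> 0 \<le> v \<bullet> (A *v v)"
  unfolding Qbar_def psd_sym_def by auto

lemma Qbar_norm_le:
  fixes A :: "real^'n^'n"
  assumes "A \<in> Qbar"
  shows "norm (A *v v) \<le> norm v"
proof -
  have "norm (A *v v) \<le> onorm ((*v) A) * norm v" by (rule onorm) simp
  also have "\<dots> \<le> 1 * norm v"
    using assms unfolding Qbar_def by (intro mult_right_mono) auto
  finally show ?thesis by simp
qed

lemma Qbar_quadratic_le:
  fixes A :: "real^'n^'n"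
  assumes "A \<in> Qbar"
  shows "v \<bullet> (A *v v) \<le> (norm v)\<^sup>2"
proof -
  have "v \<bullet> (A *v v) \<le> norm v * norm (A *v v)"
    using Cauchy_Schwarz_ineq2 abs_ge_self order_trans by blast
  also have "\<dots> \<le> norm v * norm v" using Qbar_norm_le[OF assms] by (intro mult_left_mono) auto
  finally show ?thesis by (simp add: power2_eq_square)
qed

lemma Qbar_norm_sq_le_quadratic:
  fixes A :: "real^'n^'n"
  assumes "A \<in> Qbar"
  shows "(norm (A *v v))\<^sup>2 \<le> v \<bullet> (A *v v)"
proof -
  define y where "y = A *v v"
  have "0 \<le> (v - y) \<bullet> (A *v (v - y))" by (rule Qbar_quadratic_nonneg[OF assms])
  also have "\<dots> = v \<bullet> (A *v v) - 2 * (y \<bullet> y) + y \<bullet> (A *v y)"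
    using symmetric_matrix_inner_commute[OF Qbar_transpose[OF assms], of v y]
    by (simp add: y_def matrix_vector_mult_diff_distrib inner_diff_left inner_diff_right inner_commute)
  finally show ?thesis
    using Qbar_quadratic_le[OF assms, of y] by (simp add: y_def power2_norm_eq_inner)
qed

lemma quadratic_form_add_le:
  fixes A :: "real^'n^'n"
  assumes "\<And>v. 0 \<le> v \<bullet> (A *v v)"
  shows "(u + d) \<bullet> (A *v (u + d)) \<le> 2 * (u \<bullet> (A *v u)) + 2 * (d \<bullet> (A *v d))"
proof -
  have "(u + d) \<bullet> (A *v (u + d)) + (u - d) \<bullet> (A *v (u - d)) = 2 * (u \<bullet> (A *v u)) + 2 * (d \<bullet> (A *v d))"
    by (simp add: matrix_vector_right_distrib matrix_vector_mult_diff_distrib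
        inner_add_left inner_add_right inner_diff_left inner_diff_right)
  then show ?thesis using assms[of "u - d"] by linarith
qed

lemma linear_coeff_zero_if_quadratic_nonneg:
  fixes a b :: real
  assumes "\<And>t. 0 \<le> a * t + b * t\<^sup>2"
  shows "a = 0"
proof (rule ccontr)
  assume "a \<noteq> 0"
  define s where "s = 1 / (\<bar>b\<bar> + 1)"
  have s: "0 < s" "b * s < 1"
    unfolding s_def by (auto simp: field_simps abs_if)
  have "0 \<le> a * (- a * s) + b * (- a * s)\<^sup>2" by (rule assms)
  also have "\<dots> = a\<^sup>2 * s * (b * s - 1)" by (simp add: power2_eq_square algebra_simps)
  also have "\<dots> < 0" using \<open>a \<noteq> 0\<close> s by (intro mult_pos_neg) auto
  finally show False by simp
qed

lemma symmetric_matrix_Rayleigh_minimiser: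
  fixes M :: "real^'n^'n"
  assumes sym: "transpose M = M"
  obtains u l where "norm u = 1" "M *v u = l *\<^sub>R u" "\<And>v. l * (norm v)\<^sup>2 \<le> v \<bullet> (M *v v)"
proof -
  have ne: "sphere (0::real^'n) 1 \<noteq> {}" by simp
  have "continuous_on (sphere 0 1) (\<lambda>u::real^'n. u \<bullet> (M *v u))"
    by (intro continuous_intros linear_continuous_on) simp
  then obtain u where u_sphere: "u \<in> sphere 0 1"
    and min: "\<And>w. w \<in> sphere 0 1 \<Longrightarrow> u \<bullet> (M *v u) \<le> w \<bullet> (M *v w)"
    using continuous_attains_inf[OF compact_sphere ne] by blast
  have u: "norm u = 1" using u_sphere by simp
  define l where "l = u \<bullet> (M *v u)"
  have Rayleigh: "l * (norm w)\<^sup>2 \<le> w \<bullet> (M *v w)" for w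
  proof (cases "w = 0")
    case False
    have "l \<le> (w /\<^sub>R norm w) \<bullet> (M *v (w /\<^sub>R norm w))"
      unfolding l_def using False by (intro min) simp
    also have "\<dots> = (w \<bullet> (M *v w)) / (norm w)\<^sup>2"
      by (simp add: matrix_vector_mult_scaleR power2_eq_square field_simps)
    finally show ?thesis using False by (simp add: field_simps)
  qed simp
  \<comment> \<open>Along u + t e the Rayleigh inequality is a quadratic in t that is nonnegative and vanishes
    at t = 0, so its linear coefficient 2 |e|^2 must be zero: u is an eigenvector.\<close>
  define e where "e = M *v u - l *\<^sub>R u"
  have "0 \<le> (2 * (e \<bullet> e)) * t + (e \<bullet> (M *v e) - l * (e \<bullet> e)) * t\<^sup>2" for t
  proof -
    have "(norm (u + t *\<^sub>R e))\<^sup>2 = 1 + 2 * t * (u \<bullet> e) + t\<^sup>2 * (e \<bullet> e)"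
      using u unfolding power2_norm_eq_inner
      by (simp add: norm_eq_1[symmetric] inner_commute power2_eq_square algebra_simps)
    moreover have "(u + t *\<^sub>R e) \<bullet> (M *v (u + t *\<^sub>R e)) = l + 2 * t * (e \<bullet> (M *v u)) + t\<^sup>2 * (e \<bullet> (M *v e))"
      using symmetric_matrix_inner_commute[OF sym, of e u]
      by (simp add: l_def inner_commute power2_eq_square algebra_simps)
    moreover have "e \<bullet> (M *v u) = e \<bullet> e + l * (u \<bullet> e)"
      unfolding e_def by (simp add: inner_commute algebra_simps)
    ultimately show ?thesis
      using Rayleigh[of "u + t *\<^sub>R e"] by (simp add: algebra_simps)
  qed
  then have "2 * (e \<bullet> e) = 0" by (rule linear_coeff_zero_if_quadratic_nonneg)
  then have eig: "M *v u = l *\<^sub>R u" unfolding e_def by simp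
  show ?thesis by (rule that[OF u eig Rayleigh])
qed

lemma gram_eigenvalue_nonneg:
  fixes A :: "real^'n^'n"
  assumes "(transpose A ** A) *v v = m *\<^sub>R v" and "v \<noteq> 0"
  shows "0 \<le> m"
proof -
  have "m * (v \<bullet> v) = v \<bullet> ((transpose A ** A) *v v)" using assms(1) by simp
  also have "\<dots> = ((A *v v) v* A) \<bullet> v" by (simp add: inner_commute flip: matrix_vector_mul_assoc)
  also have "\<dots> = (A *v v) \<bullet> (A *v v)" by (rule dot_lmul_matrix)
  finally have "0 \<le> m * (v \<bullet> v)" by simp
  moreover have "0 < v \<bullet> v" using assms(2) by simp
  ultimately show ?thesis by (simp add: zero_le_mult_iff)
qed

lemma sigma_min_le_sqrt_gram_eigenvalue:
  fixes A :: "real^'n^'n"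
  assumes "(transpose A ** A) *v v = m *\<^sub>R v" and "v \<noteq> 0"
  shows "sigma_min A \<le> sqrt m"
  unfolding sigma_min_def
proof (intro real_sqrt_le_mono cInf_lower)
  show "m \<in> {l. \<exists>v. v \<noteq> 0 \<and> (transpose A ** A) *v v = l *\<^sub>R v}" using assms by blast
  show "bdd_below {l. \<exists>v. v \<noteq> 0 \<and> (transpose A ** A) *v v = l *\<^sub>R v}"
    using gram_eigenvalue_nonneg by (intro bdd_belowI[of _ 0]) blast
qed

lemma psd_sym_sigma_min_quadratic_le:
  fixes M :: "real^'n^'n"
  assumes "psd_sym M"
  shows "sigma_min M * (norm v)\<^sup>2 \<le> v \<bullet> (M *v v)"
proof -
  have sym: "transpose M = M" using assms unfolding psd_sym_def by blast
  obtain u l where u: "norm u = 1" and eig: "M *v u = l *\<^sub>R u"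
    and Rayleigh: "\<And>v. l * (norm v)\<^sup>2 \<le> v \<bullet> (M *v v)"
    using symmetric_matrix_Rayleigh_minimiser[OF sym] by blast
  have "0 \<le> u \<bullet> (M *v u)" using assms unfolding psd_sym_def by blast
  moreover have "u \<bullet> u = 1" using u by (simp add: norm_eq_1)
  ultimately have "0 \<le> l" by (simp add: eig)
  have "(transpose M ** M) *v u = l\<^sup>2 *\<^sub>R u"
    by (simp add: sym eig matrix_vector_mult_scaleR power2_eq_square flip: matrix_vector_mul_assoc)
  moreover have "u \<noteq> 0" using u by auto
  ultimately have "sigma_min M \<le> l"
    using sigma_min_le_sqrt_gram_eigenvalue \<open>0 \<le> l\<close> by fastforce
  then have "sigma_min M * (norm v)\<^sup>2 \<le> l * (norm v)\<^sup>2" by (intro mult_right_mono) auto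
  with Rayleigh[of v] show ?thesis by linarith
qed

lemma riemann_integrable_on_imp_integrable_on:
  assumes "riemann_integrable_on f a b"
  shows "f integrable_on {a..b}"
proof -
  obtain I where I: "\<forall>e>0. \<exists>d>0. \<forall>p. p tagged_division_of {a..b} \<and> (\<lambda>x. ball x d) fine p \<longrightarrow>
      norm ((\<Sum>(x,K)\<in>p. measure lborel K *\<^sub>R f x) - I) < e"
    using assms unfolding riemann_integrable_on_def by blast
  have "(f has_integral I) {a..b}"
    unfolding has_integral_real
  proof (intro allI impI)
    fix e :: real assume "e > 0"
    then obtain d where "d > 0" and d: "\<forall>p. p tagged_division_of {a..b} \<and> (\<lambda>x. ball x d) fine p \<longrightarrow>
        norm ((\<Sum>(x,K)\<in>p. measure lborel K *\<^sub>R f x) - I) < e"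
      using I by blast
    then show "\<exists>\<gamma>. gauge \<gamma> \<and> (\<forall>\<D>. \<D> tagged_division_of {a..b} \<and> \<gamma> fine \<D> \<longrightarrow>
        norm (sum (\<lambda>(x,k). measure lborel k *\<^sub>R f x) \<D> - I) < e)"
      by (intro exI[of _ "\<lambda>x. ball x d"]) (auto simp: gauge_ball)
  qed
  then show ?thesis by blast
qed

lemma integrable_on_if_riemann_integrable:
  fixes f :: "real \<Rightarrow> 'a::banach"
  assumes "\<And>b. 0 \<le> b \<Longrightarrow> riemann_integrable_on f 0 b" and "0 \<le> a"
  shows "f integrable_on {a..b}"
proof (cases "a \<le> b")
  case True
  then have "f integrable_on {0..b}" using assms by (intro riemann_integrable_on_imp_integrable_on assms(1)) simp
  then show ?thesis by (rule integrable_on_subinterval) (use assms in auto)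
qed (simp add: integrable_on_empty)

lemma bounded_linear_transpose: "bounded_linear (transpose :: real^'n^'m \<Rightarrow> real^'m^'n)"
proof -
  have "linear (transpose :: real^'n^'m \<Rightarrow> real^'m^'n)"
    by (rule linearI) (simp_all add: transpose_def vec_eq_iff)
  then show ?thesis by (simp add: linear_conv_bounded_linear)
qed

lemma bounded_linear_quadratic_form: "bounded_linear (\<lambda>A::real^'n^'n. v \<bullet> (A *v v))"
proof -
  have "linear (\<lambda>A::real^'n^'n. v \<bullet> (A *v v))"
    by (rule linearI)
      (simp_all add: matrix_vector_mult_add_rdistrib inner_add_right scaleR_matrix_vector_assoc[symmetric])
  then show ?thesis by (simp add: linear_conv_bounded_linear)
qed

lemma integral_quadratic_form:
  fixes Q :: "'a::euclidean_space \<Rightarrow> real^'n^'n"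
  assumes "Q integrable_on S"
  shows "(\<lambda>s. v \<bullet> (Q s *v v)) integrable_on S"
    and "integral S (\<lambda>s. v \<bullet> (Q s *v v)) = v \<bullet> (integral S Q *v v)"
  using integrable_linear[OF assms bounded_linear_quadratic_form]
    integral_linear[OF assms bounded_linear_quadratic_form]
  by (simp_all add: o_def)

lemma psd_sym_integral:
  fixes Q :: "'a::euclidean_space \<Rightarrow> real^'n^'n"
  assumes Q: "Q integrable_on S" and psd: "\<And>s. s \<in> S \<Longrightarrow> psd_sym (Q s)"
  shows "psd_sym (integral S Q)"
  unfolding psd_sym_def
proof
  have "transpose (integral S Q) = integral S (transpose \<circ> Q)"
    by (rule integral_linear[OF Q bounded_linear_transpose, symmetric])
  also have "\<dots> = integral S Q"
    using psd by (intro integral_cong) (simp add: psd_sym_def)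
  finally show "transpose (integral S Q) = integral S Q" .
  show "\<forall>v. 0 \<le> v \<bullet> (integral S Q *v v)"
    using psd by (auto simp: psd_sym_def integral_quadratic_form(2)[OF Q, symmetric]
        intro!: integral_nonneg integral_quadratic_form(1)[OF Q])
qed

lemma sigma_min_integral_Qbar_le:
  fixes Q :: "real \<Rightarrow> real^'n^'n"
  assumes Q: "Q integrable_on {a..b}" and "a \<le> b" and Qbar: "\<And>s. s \<in> {a..b} \<Longrightarrow> Q s \<in> Qbar"
  shows "sigma_min (integral {a..b} Q) \<le> b - a"
proof -
  obtain i :: 'n where True by simp
  define v :: "real^'n" where "v = axis i 1"
  have "psd_sym (integral {a..b} Q)"
    using Qbar by (intro psd_sym_integral[OF Q]) (simp add: Qbar_def)
  then have "sigma_min (integral {a..b} Q) \<le> v \<bullet> (integral {a..b} Q *v v)"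
    using psd_sym_sigma_min_quadratic_le[of _ v] by (simp add: v_def)
  also have "\<dots> = integral {a..b} (\<lambda>s. v \<bullet> (Q s *v v))"
    by (rule integral_quadratic_form(2)[OF Q, symmetric])
  also have "\<dots> \<le> integral {a..b} (\<lambda>s. 1)"
    using Qbar Qbar_quadratic_le[of _ v]
    by (intro integral_le integral_quadratic_form(1)[OF Q]) (auto simp: v_def)
  finally show ?thesis using \<open>a \<le> b\<close> by simp
qed

lemma quadratic_increments_telescope:
  fixes h :: "real \<Rightarrow> real"
  assumes "0 \<le> \<delta>"
    and incr: "\<And>u w. a \<le> u \<Longrightarrow> u \<le> w \<Longrightarrow> w \<le> b \<Longrightarrow> \<bar>h w - h u\<bar> \<le> K * (w - u)\<^sup>2"
  shows "a + real k * \<delta> \<le> b \<Longrightarrow> \<bar>h (a + real k * \<delta>) - h a\<bar> \<le> K * \<delta>\<^sup>2 * real k"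
proof (induction k)
  case (Suc k)
  define u where "u = a + real k * \<delta>"
  have next_point: "a + real (Suc k) * \<delta> = u + \<delta>" by (simp add: u_def algebra_simps)
  have "a \<le> u" using \<open>0 \<le> \<delta>\<close> by (simp add: u_def)
  have "u \<le> b" using Suc.prems \<open>0 \<le> \<delta>\<close> next_point by linarith
  have "\<bar>h (u + \<delta>) - h u\<bar> \<le> K * \<delta>\<^sup>2"
    using incr[of u "u + \<delta>"] \<open>a \<le> u\<close> \<open>0 \<le> \<delta>\<close> Suc.prems
    unfolding next_point by simp
  moreover have "\<bar>h u - h a\<bar> \<le> K * \<delta>\<^sup>2 * real k" using Suc.IH \<open>u \<le> b\<close> by (simp add: u_def)
  ultimately have "\<bar>h (u + \<delta>) - h a\<bar> \<le> K * \<delta>\<^sup>2 + K * \<delta>\<^sup>2 * real k" by arith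
  then show ?case unfolding next_point by (simp add: algebra_simps)
qed simp

lemma eq_if_quadratic_increments:
  fixes h :: "real \<Rightarrow> real"
  assumes "a \<le> b"
    and incr: "\<And>u w. a \<le> u \<Longrightarrow> u \<le> w \<Longrightarrow> w \<le> b \<Longrightarrow> \<bar>h w - h u\<bar> \<le> K * (w - u)\<^sup>2"
  shows "h b = h a"
proof -
  define E where "E = \<bar>h b - h a\<bar>"
  have E_le: "E * real N \<le> K * (b - a)\<^sup>2" if "0 < N" for N :: nat
  proof -
    define \<delta> where "\<delta> = (b - a) / real N"
    have "0 \<le> \<delta>" using assms by (simp add: \<delta>_def)
    moreover have N_steps: "a + real N * \<delta> = b" using that by (simp add: \<delta>_def)
    ultimately have "\<bar>h (a + real N * \<delta>) - h a\<bar> \<le> K * \<delta>\<^sup>2 * real N"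
      using quadratic_increments_telescope[of \<delta> a b h K N] incr by simp
    then have "E \<le> K * \<delta>\<^sup>2 * real N" unfolding E_def N_steps .
    also have "\<dots> = K * (b - a)\<^sup>2 / real N"
      using that by (simp add: \<delta>_def power2_eq_square field_simps)
    finally show ?thesis using that by (simp add: field_simps)
  qed
  have "E \<le> 0"
  proof (rule ccontr)
    assume "\<not> E \<le> 0"
    then have "0 < E" by simp
    obtain N :: nat where N: "max 0 (K * (b - a)\<^sup>2 / E) < real N"
      using reals_Archimedean2 by blast
    then have "0 < N" "K * (b - a)\<^sup>2 / E < real N" by simp_all
    then have "K * (b - a)\<^sup>2 < real N * E" using \<open>0 < E\<close> by (simp add: pos_divide_less_eq)
    then show False using E_le[OF \<open>0 < N\<close>] by (simp add: mult.commute)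
  qed
  then show ?thesis unfolding E_def by simp
qed

lemma delta_fn_le:
  assumes "0 < \<epsilon>" "\<epsilon> \<le> T"
  shows "delta_fn \<epsilon> T \<le> \<epsilon> / (1 + T\<^sup>2)"
proof (cases "T \<le> 1")
  case True
  then have "T\<^sup>2 \<le> 1" using assms by (simp add: power_le_one)
  then have "\<epsilon> / 2 \<le> \<epsilon> / (1 + T\<^sup>2)"
    using assms by (intro divide_left_mono) (auto intro: add_pos_nonneg)
  then show ?thesis unfolding delta_fn_def by (rule min.coboundedI1)
next
  case False
  have "\<epsilon>\<^sup>2 \<le> T\<^sup>2" using assms by (intro power_mono) auto
  moreover have "1 + T\<^sup>2 \<le> 240 * T ^ 3"
  proof -
    have "1 \<le> T ^ 3" "T\<^sup>2 \<le> T ^ 3" using False by (auto intro: one_le_power power_increasing)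
    then show ?thesis by linarith
  qed
  ultimately have "\<epsilon>\<^sup>2 * (1 + T\<^sup>2) \<le> T\<^sup>2 * (240 * T ^ 3)" by (intro mult_mono) auto
  also have "\<dots> = 240 * T ^ 5" by (simp add: power_add[symmetric])
  finally have "\<epsilon> * (\<epsilon>\<^sup>2 * (1 + T\<^sup>2)) \<le> \<epsilon> * (240 * T ^ 5)"
    using assms by (intro mult_left_mono) auto
  then have "\<epsilon> ^ 3 / (240 * T ^ 5) \<le> \<epsilon> / (1 + T\<^sup>2)"
    using assms by (simp add: divide_simps add_pos_nonneg power2_eq_square power3_eq_cube mult.assoc)
  then show ?thesis unfolding delta_fn_def by (rule min.coboundedI2)
qed

text \<open>Lemma names call x s \<bullet> (Q s *v x s) the dissipation: |x s|^2 decreases at twice this rate.\<close>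

locale Qbar_solution =
  fixes Q :: "real \<Rightarrow> real^'n^'n" and x :: "real \<Rightarrow> real^'n"
  assumes Q_in_Qbar: "\<And>t. 0 \<le> t \<Longrightarrow> Q t \<in> Qbar"
    and solution: "is_solution Q x"
begin

lemma integrable_Qx:
  assumes "0 \<le> a" "a \<le> b"
  shows "(\<lambda>s. Q s *v x s) integrable_on {a..b}"
proof -
  have "0 \<le> b" using assms by linarith
  then have "(\<lambda>s. Q s *v x s) integrable_on {0..b}" using solution unfolding is_solution_def by blast
  then show ?thesis by (rule integrable_on_subinterval) (use assms in auto)
qed

lemma increment_eq:
  assumes "0 \<le> a" "a \<le> b"
  shows "x b = x a - integral {a..b} (\<lambda>s. Q s *v x s)"
proof -
  have x_eq: "x t = x 0 - integral {0..t} (\<lambda>s. Q s *v x s)" if "0 \<le> t" for t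
    using solution that unfolding is_solution_def by blast
  have "x b = x 0 - integral {0..b} (\<lambda>s. Q s *v x s)" using x_eq[of b] assms by simp
  also have "integral {0..b} (\<lambda>s. Q s *v x s)
      = integral {0..a} (\<lambda>s. Q s *v x s) + integral {a..b} (\<lambda>s. Q s *v x s)"
    using assms by (intro Henstock_Kurzweil_Integration.integral_combine[symmetric] integrable_Qx) auto
  also have "x 0 - \<dots> = x a - integral {a..b} (\<lambda>s. Q s *v x s)"
    using x_eq[of a] assms by (simp add: algebra_simps)
  finally show ?thesis .
qed

lemma continuous_on_interval:
  assumes "0 \<le> a"
  shows "continuous_on {a..b} x"
proof -
  have "continuous_on {0..} x" using solution unfolding is_solution_def by blast
  then show ?thesis by (rule continuous_on_subset) (use assms in auto)
qed

lemma bounded_on_interval: "\<exists>C. \<forall>s\<in>{0..b}. norm (x s) \<le> C"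
proof -
  have "bounded (x ` {0..b})"
    using continuous_on_interval by (intro compact_imp_bounded compact_continuous_image) auto
  then show ?thesis by (auto simp: bounded_iff)
qed

lemma norm_Qx_le: "0 \<le> s \<Longrightarrow> norm (Q s *v x s) \<le> norm (x s)"
  using Q_in_Qbar Qbar_norm_le by blast

lemma dissipation_nonneg: "0 \<le> s \<Longrightarrow> 0 \<le> x s \<bullet> (Q s *v x s)"
  using Q_in_Qbar Qbar_quadratic_nonneg by blast

lemma norm_Qx_le_bound:
  assumes "0 \<le> u" "\<forall>s\<in>{u..w}. norm (x s) \<le> C" "s \<in> {u..w}"
  shows "norm (Q s *v x s) \<le> C"
proof -
  have "0 \<le> s" "norm (x s) \<le> C" using assms by auto
  then show ?thesis using norm_Qx_le[of s] by linarith
qed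

lemma norm_integral_Qx_le:
  assumes "0 \<le> u" "u \<le> w" and C: "\<forall>s\<in>{u..w}. norm (x s) \<le> C"
  shows "norm (integral {u..w} (\<lambda>s. Q s *v x s)) \<le> C * (w - u)"
proof -
  have "0 \<le> C" using C assms(2) by (metis atLeastAtMost_iff norm_ge_zero order.trans order.refl)
  moreover have "((\<lambda>s. Q s *v x s) has_integral integral {u..w} (\<lambda>s. Q s *v x s)) (cbox u w)"
    unfolding cbox_interval using integrable_Qx[OF assms(1,2)] by (rule integrable_integral)
  moreover have "norm (Q s *v x s) \<le> C" if "s \<in> cbox u w" for s
    using norm_Qx_le_bound[OF assms(1) C] that by (simp add: cbox_interval)
  ultimately have "norm (integral {u..w} (\<lambda>s. Q s *v x s)) \<le> C * measure lborel (cbox u w)"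
    by (rule has_integral_bound)
  then show ?thesis using assms by simp
qed

lemma norm_increment_le:
  assumes "0 \<le> u" "u \<le> w" and "\<forall>s\<in>{u..w}. norm (x s) \<le> C"
  shows "norm (x w - x u) \<le> C * (w - u)"
  using norm_integral_Qx_le[OF assms] increment_eq[OF assms(1,2)] by (simp add: norm_minus_commute)

lemma integrable_dissipation:
  assumes "0 \<le> a" "a \<le> b"
  shows "(\<lambda>s. x s \<bullet> (Q s *v x s)) integrable_on {a..b}"
proof -
  obtain C where C: "\<forall>s\<in>{0..b}. norm (x s) \<le> C" using bounded_on_interval by blast
  then have C_ab: "\<forall>s\<in>{a..b}. norm (x s) \<le> C" using assms by auto
  have Qx: "(\<lambda>s. Q s *v x s) absolutely_integrable_on {a..b}"
  proof (rule measurable_bounded_by_integrable_imp_absolutely_integrable[where g = "\<lambda>_. C"])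
    show "(\<lambda>s. Q s *v x s) \<in> borel_measurable (lebesgue_on {a..b})"
      using integrable_Qx[OF assms] by (rule integrable_imp_measurable)
    show "norm (Q s *v x s) \<le> C" if "s \<in> {a..b}" for s
      using norm_Qx_le_bound[OF assms(1) C_ab that] .
  qed auto
  have bil: "bilinear ((\<bullet>) :: real^'n \<Rightarrow> real^'n \<Rightarrow> real)"
    using bounded_bilinear_inner bilinear_conv_bounded_bilinear by blast
  have meas: "x \<in> borel_measurable (lebesgue_on {a..b})"
    using continuous_on_interval[OF assms(1)] by (rule continuous_imp_measurable_on_sets_lebesgue) simp
  have bdd: "bounded (x ` {a..b})" unfolding bounded_iff using C_ab by blast
  have "(\<lambda>s. x s \<bullet> (Q s *v x s)) absolutely_integrable_on {a..b}"
    by (rule absolutely_integrable_bounded_measurable_product[OF bil meas _ bdd Qx]) simp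
  then show ?thesis using absolutely_integrable_on_def by blast
qed

lemma integral_dissipation_approx:
  assumes "0 \<le> u" "u \<le> w" and C: "\<forall>s\<in>{u..w}. norm (x s) \<le> C"
  shows "\<bar>integral {u..w} (\<lambda>s. x s \<bullet> (Q s *v x s)) - x u \<bullet> integral {u..w} (\<lambda>s. Q s *v x s)\<bar>
    \<le> C\<^sup>2 * (w - u)\<^sup>2"
proof -
  let ?f = "\<lambda>s. Q s *v x s"
  have f: "?f integrable_on {u..w}" by (rule integrable_Qx[OF assms(1,2)])
  have "((\<lambda>s. x u \<bullet> ?f s) has_integral x u \<bullet> integral {u..w} ?f) {u..w}"
    using has_integral_linear[OF integrable_integral[OF f] bounded_linear_inner_right] by (simp add: o_def)
  then have "((\<lambda>s. x s \<bullet> ?f s - x u \<bullet> ?f s) has_integral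
      integral {u..w} (\<lambda>s. x s \<bullet> ?f s) - x u \<bullet> integral {u..w} ?f) {u..w}"
    using integrable_dissipation[OF assms(1,2)] by (intro has_integral_diff integrable_integral)
  then have R: "((\<lambda>s. (x s - x u) \<bullet> ?f s) has_integral
      integral {u..w} (\<lambda>s. x s \<bullet> ?f s) - x u \<bullet> integral {u..w} ?f) (cbox u w)"
    by (simp add: inner_diff_left cbox_interval)
  have "0 \<le> C" using C assms(2) by (metis atLeastAtMost_iff norm_ge_zero order.trans order.refl)
  have "norm ((x s - x u) \<bullet> ?f s) \<le> C\<^sup>2 * (w - u)" if "s \<in> cbox u w" for s
  proof -
    have s: "u \<le> s" "s \<le> w" using that by (auto simp: cbox_interval)
    have "norm ((x s - x u) \<bullet> ?f s) \<le> norm (x s - x u) * norm (?f s)"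
      using Cauchy_Schwarz_ineq2 by simp
    also have "\<dots> \<le> (C * (w - u)) * C"
    proof (rule mult_mono)
      have "norm (x s - x u) \<le> C * (s - u)" using norm_increment_le[of u s C] assms s C by auto
      also have "\<dots> \<le> C * (w - u)" using s \<open>0 \<le> C\<close> by (intro mult_left_mono) auto
      finally show "norm (x s - x u) \<le> C * (w - u)" .
      show "norm (?f s) \<le> C" using norm_Qx_le_bound[OF assms(1) C] s by simp
    qed (use \<open>0 \<le> C\<close> assms in auto)
    finally show ?thesis by (simp add: power2_eq_square algebra_simps)
  qed
  with R \<open>0 \<le> C\<close> \<open>u \<le> w\<close> have "norm (integral {u..w} (\<lambda>s. x s \<bullet> ?f s) - x u \<bullet> integral {u..w} ?f)
      \<le> C\<^sup>2 * (w - u) * measure lborel (cbox u w)"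
    by (intro has_integral_bound) auto
  then show ?thesis using assms by (simp add: power2_eq_square)
qed

lemma energy_error_le:
  assumes "0 \<le> u" "u \<le> w" and C: "\<forall>s\<in>{u..w}. norm (x s) \<le> C"
  shows "\<bar>(norm (x u))\<^sup>2 - (norm (x w))\<^sup>2 - 2 * integral {u..w} (\<lambda>s. x s \<bullet> (Q s *v x s))\<bar>
    \<le> 3 * C\<^sup>2 * (w - u)\<^sup>2"
proof -
  define F where "F = integral {u..w} (\<lambda>s. Q s *v x s)"
  define r where "r = integral {u..w} (\<lambda>s. x s \<bullet> (Q s *v x s)) - x u \<bullet> F"
  have xw: "x w = x u - F" unfolding F_def by (rule increment_eq[OF assms(1,2)])
  have eq: "(norm (x u))\<^sup>2 - (norm (x w))\<^sup>2 - 2 * integral {u..w} (\<lambda>s. x s \<bullet> (Q s *v x s))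
      = - (norm F)\<^sup>2 - 2 * r"
    unfolding xw power2_norm_eq_inner r_def by (simp add: inner_diff_left inner_diff_right inner_commute)
  have F_le: "(norm F)\<^sup>2 \<le> C\<^sup>2 * (w - u)\<^sup>2"
    using norm_integral_Qx_le[OF assms] unfolding F_def power_mult_distrib[symmetric]
    by (intro power_mono) auto
  have r_le: "\<bar>r\<bar> \<le> C\<^sup>2 * (w - u)\<^sup>2"
    using integral_dissipation_approx[OF assms] by (simp add: r_def F_def)
  have "0 \<le> (norm F)\<^sup>2" by simp
  with F_le r_le have "\<bar>- (norm F)\<^sup>2 - 2 * r\<bar> \<le> 3 * (C\<^sup>2 * (w - u)\<^sup>2)" by arith
  then show ?thesis unfolding eq by simp
qed

lemma energy_identity:
  assumes "0 \<le> a" "a \<le> b"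
  shows "(norm (x a))\<^sup>2 - (norm (x b))\<^sup>2 = 2 * integral {a..b} (\<lambda>s. x s \<bullet> (Q s *v x s))"
proof -
  let ?g = "\<lambda>s. x s \<bullet> (Q s *v x s)"
  have combine: "integral {0..u} ?g + integral {u..w} ?g = integral {0..w} ?g"
    if "0 \<le> u" "u \<le> w" for u w
    using that by (intro Henstock_Kurzweil_Integration.integral_combine integrable_dissipation) auto
  obtain C where C: "\<forall>s\<in>{0..b}. norm (x s) \<le> C" using bounded_on_interval by blast
  \<comment> \<open>x need not be differentiable; instead the defect h has increments of order (w - u)^2.\<close>
  define h where "h s = (norm (x s))\<^sup>2 + 2 * integral {0..s} ?g" for s
  have "h b = h a"
  proof (rule eq_if_quadratic_increments[OF \<open>a \<le> b\<close>])
    fix u w assume uw: "a \<le> u" "u \<le> w" "w \<le> b"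
    have "h w - h u = - ((norm (x u))\<^sup>2 - (norm (x w))\<^sup>2 - 2 * integral {u..w} ?g)"
      using combine[of u w] uw assms by (simp add: h_def algebra_simps)
    also have "\<bar>\<dots>\<bar> \<le> 3 * C\<^sup>2 * (w - u)\<^sup>2"
      using C uw assms by (subst abs_minus_cancel, intro energy_error_le) auto
    finally show "\<bar>h w - h u\<bar> \<le> 3 * C\<^sup>2 * (w - u)\<^sup>2" .
  qed
  then show ?thesis using combine[of a b] assms by (simp add: h_def algebra_simps)
qed

lemma norm_antimono:
  assumes "0 \<le> a" "a \<le> b"
  shows "(norm (x b))\<^sup>2 \<le> (norm (x a))\<^sup>2"
proof -
  have "0 \<le> integral {a..b} (\<lambda>s. x s \<bullet> (Q s *v x s))"
    using assms dissipation_nonneg by (intro integral_nonneg integrable_dissipation) auto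
  then show ?thesis using energy_identity[OF assms] by linarith
qed

lemma integral_dissipation_le:
  assumes "0 \<le> a" "a \<le> s" "s \<le> b"
  shows "integral {a..s} (\<lambda>t. x t \<bullet> (Q t *v x t)) \<le> integral {a..b} (\<lambda>t. x t \<bullet> (Q t *v x t))"
proof -
  have "integral {a..s} (\<lambda>t. x t \<bullet> (Q t *v x t)) + integral {s..b} (\<lambda>t. x t \<bullet> (Q t *v x t))
      = integral {a..b} (\<lambda>t. x t \<bullet> (Q t *v x t))"
    using assms by (intro Henstock_Kurzweil_Integration.integral_combine integrable_dissipation) auto
  moreover have "0 \<le> integral {s..b} (\<lambda>t. x t \<bullet> (Q t *v x t))"
    using assms dissipation_nonneg by (intro integral_nonneg integrable_dissipation) auto
  ultimately show ?thesis by linarith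
qed

lemma norm_increment_sq_le:
  assumes "0 \<le> a" "a \<le> s"
  shows "(norm (x s - x a))\<^sup>2 \<le> (s - a) * integral {a..s} (\<lambda>t. x t \<bullet> (Q t *v x t))"
proof -
  let ?g = "\<lambda>t. x t \<bullet> (Q t *v x t)"
  define K where "K = norm (x s - x a)"
  have gi: "?g integrable_on {a..s}" by (rule integrable_dissipation[OF assms])
  have P: "0 \<le> integral {a..s} ?g" using assms dissipation_nonneg by (intro integral_nonneg gi) auto
  \<comment> \<open>Integrate 2 e |Q x| \<le> |Q x|^2 + e^2 \<le> x \<bullet> Q x + e^2, then optimise over e.\<close>
  have key: "2 * e * K \<le> integral {a..s} ?g + e\<^sup>2 * (s - a)" if "0 < e" for e
  proof -
    have "2 * e * K = norm (integral {a..s} (\<lambda>t. (2 * e) *\<^sub>R (Q t *v x t)))"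
      using increment_eq[OF assms] that by (simp add: K_def)
    also have "\<dots> \<le> integral {a..s} (\<lambda>t. ?g t + e\<^sup>2)"
    proof (rule integral_norm_bound_integral)
      show "(\<lambda>t. (2 * e) *\<^sub>R (Q t *v x t)) integrable_on {a..s}"
        using integrable_Qx[OF assms] by (rule integrable_cmul)
      show "(\<lambda>t. ?g t + e\<^sup>2) integrable_on {a..s}"
        by (rule Henstock_Kurzweil_Integration.integrable_add[OF gi integrable_const_ivl])
      fix t assume t: "t \<in> {a..s}"
      then have "0 \<le> t" using assms by simp
      have "norm ((2 * e) *\<^sub>R (Q t *v x t)) \<le> (norm (Q t *v x t))\<^sup>2 + e\<^sup>2"
        using sum_squares_bound[of "norm (Q t *v x t)" e] that by (simp add: power2_eq_square algebra_simps)
      also have "\<dots> \<le> ?g t + e\<^sup>2"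
        using Qbar_norm_sq_le_quadratic[OF Q_in_Qbar[OF \<open>0 \<le> t\<close>]] by simp
      finally show "norm ((2 * e) *\<^sub>R (Q t *v x t)) \<le> ?g t + e\<^sup>2" .
    qed
    also have "\<dots> = integral {a..s} ?g + e\<^sup>2 * (s - a)"
      using Henstock_Kurzweil_Integration.integral_add[OF gi integrable_const_ivl] assms by simp
    finally show ?thesis .
  qed
  show ?thesis
  proof (cases "K = 0")
    case True
    then show ?thesis using P assms by (simp add: K_def)
  next
    case False
    then have "s \<noteq> a" by (auto simp: K_def)
    then have "0 < K" "a < s" using False assms by (auto simp: K_def)
    define e where "e = K / (s - a)"
    have "2 * e * K \<le> integral {a..s} ?g + e\<^sup>2 * (s - a)"
      using \<open>0 < K\<close> \<open>a < s\<close> by (intro key) (simp add: e_def)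
    moreover have "2 * e * K = 2 * (K\<^sup>2 / (s - a))" "e\<^sup>2 * (s - a) = K\<^sup>2 / (s - a)"
      using \<open>a < s\<close> by (simp_all add: e_def power2_eq_square)
    ultimately have "K\<^sup>2 / (s - a) \<le> integral {a..s} ?g" by linarith
    then have "K\<^sup>2 \<le> integral {a..s} ?g * (s - a)" using \<open>a < s\<close> by (simp add: pos_divide_le_eq)
    then show ?thesis unfolding K_def by (simp add: mult.commute)
  qed
qed

lemma window_quadratic_form_le:
  assumes "0 \<le> a" "0 < T" and Q: "Q integrable_on {a..a+T}"
  shows "x a \<bullet> (integral {a..a+T} Q *v x a) \<le> 2 * (1 + T\<^sup>2) * integral {a..a+T} (\<lambda>s. x s \<bullet> (Q s *v x s))"
proof -
  let ?g = "\<lambda>s. x s \<bullet> (Q s *v x s)"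
  define P where "P = integral {a..a+T} ?g"
  have gi: "?g integrable_on {a..a+T}" using assms by (intro integrable_dissipation) auto
  have gi2: "(\<lambda>s. 2 * ?g s) integrable_on {a..a+T}" using integrable_on_cmult_left[OF gi, of 2] by simp
  have pointwise: "x a \<bullet> (Q s *v x a) \<le> 2 * ?g s + 2 * (T * P)" if s: "s \<in> {a..a+T}" for s
  proof -
    have Qs: "Q s \<in> Qbar" using s assms by (intro Q_in_Qbar) simp
    have "x a \<bullet> (Q s *v x a) \<le> 2 * ?g s + 2 * ((x a - x s) \<bullet> (Q s *v (x a - x s)))"
      using quadratic_form_add_le[OF Qbar_quadratic_nonneg[OF Qs], of "x s" "x a - x s"] by simp
    also have "(x a - x s) \<bullet> (Q s *v (x a - x s)) \<le> (norm (x s - x a))\<^sup>2"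
      using Qbar_quadratic_le[OF Qs] by (simp add: norm_minus_commute)
    also have "\<dots> \<le> (s - a) * integral {a..s} ?g" using s assms by (intro norm_increment_sq_le) auto
    also have "\<dots> \<le> T * P"
      unfolding P_def using s assms integral_dissipation_le[of a s "a + T"]
        integral_nonneg[OF integrable_dissipation[of a s]] dissipation_nonneg
      by (intro mult_mono) auto
    finally show ?thesis by simp
  qed
  have "x a \<bullet> (integral {a..a+T} Q *v x a) = integral {a..a+T} (\<lambda>s. x a \<bullet> (Q s *v x a))"
    by (rule integral_quadratic_form(2)[OF Q, symmetric])
  also have "\<dots> \<le> integral {a..a+T} (\<lambda>s. 2 * ?g s + 2 * (T * P))"
    using pointwise gi2 by (intro integral_le integral_quadratic_form(1)[OF Q] integrable_add) auto
  also have "\<dots> = integral {a..a+T} (\<lambda>s. 2 * ?g s) + integral {a..a+T} (\<lambda>s. 2 * (T * P))"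
    using gi2 by (intro Henstock_Kurzweil_Integration.integral_add integrable_const_ivl)
  also have "\<dots> = 2 * (1 + T\<^sup>2) * P"
    using assms by (simp add: P_def power2_eq_square algebra_simps)
  finally show ?thesis unfolding P_def .
qed

lemma window_decay:
  assumes "0 \<le> a" "0 < T" "0 < \<epsilon>" and Q: "Q integrable_on {a..a+T}"
    and excited: "\<epsilon> \<le> sigma_min (integral {a..a+T} Q)"
  shows "(norm (x (a+T)))\<^sup>2 \<le> (1 - delta_fn \<epsilon> T) * (norm (x a))\<^sup>2"
proof -
  define P where "P = integral {a..a+T} (\<lambda>s. x s \<bullet> (Q s *v x s))"
  have "psd_sym (integral {a..a+T} Q)"
    using Q_in_Qbar assms(1) by (intro psd_sym_integral[OF Q]) (simp add: Qbar_def)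
  then have "sigma_min (integral {a..a+T} Q) * (norm (x a))\<^sup>2 \<le> x a \<bullet> (integral {a..a+T} Q *v x a)"
    by (rule psd_sym_sigma_min_quadratic_le)
  moreover have "\<epsilon> * (norm (x a))\<^sup>2 \<le> sigma_min (integral {a..a+T} Q) * (norm (x a))\<^sup>2"
    using excited by (rule mult_right_mono) simp
  ultimately have "\<epsilon> * (norm (x a))\<^sup>2 \<le> x a \<bullet> (integral {a..a+T} Q *v x a)" by linarith
  also have "\<dots> \<le> 2 * (1 + T\<^sup>2) * P" unfolding P_def by (rule window_quadratic_form_le[OF assms(1,2) Q])
  finally have "\<epsilon> / (1 + T\<^sup>2) * (norm (x a))\<^sup>2 \<le> 2 * P" by (simp add: field_simps add_pos_nonneg)
  moreover have "sigma_min (integral {a..a+T} Q) \<le> a + T - a"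
    using assms Q_in_Qbar by (intro sigma_min_integral_Qbar_le[OF Q]) auto
  then have "\<epsilon> \<le> T" using excited by simp
  then have "delta_fn \<epsilon> T \<le> \<epsilon> / (1 + T\<^sup>2)" by (rule delta_fn_le[OF \<open>0 < \<epsilon>\<close>])
  then have "delta_fn \<epsilon> T * (norm (x a))\<^sup>2 \<le> \<epsilon> / (1 + T\<^sup>2) * (norm (x a))\<^sup>2"
    by (rule mult_right_mono) simp
  moreover have "(norm (x a))\<^sup>2 - (norm (x (a+T)))\<^sup>2 = 2 * P"
    unfolding P_def using assms by (intro energy_identity) auto
  ultimately show ?thesis by (simp add: algebra_simps)
qed

end

lemma decay_le_exp_neg_sum:
  fixes V d :: "nat \<Rightarrow> real"
  assumes "\<And>n. 0 \<le> V n" and step: "\<And>n. V (Suc n) \<le> (1 - d n) * V n"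
  shows "V n \<le> exp (- (\<Sum>i<n. d i)) * V 0"
proof (induction n)
  case (Suc n)
  have "V (Suc n) \<le> (1 - d n) * V n" by (rule step)
  also have "\<dots> \<le> exp (- d n) * V n"
    using exp_ge_add_one_self[of "- d n"] assms(1) by (intro mult_right_mono) auto
  also have "\<dots> \<le> exp (- d n) * (exp (- (\<Sum>i<n. d i)) * V 0)"
    using Suc.IH by (intro mult_left_mono) auto
  also have "\<dots> = exp (- (\<Sum>i<Suc n. d i)) * V 0"
    by (simp add: exp_add[symmetric] algebra_simps)
  finally show ?case .
qed simp

lemma exp_neg_partial_sums_tendsto_0:
  fixes d :: "nat \<Rightarrow> real"
  assumes nonneg: "\<And>i. 0 \<le> d i" and "\<not> summable d"
  shows "(\<lambda>n. exp (- (\<Sum>i<n. d i))) \<longlonglongrightarrow> 0"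
proof -
  have "filterlim (\<lambda>n. \<Sum>i<n. d i) at_top sequentially"
    unfolding filterlim_at_top eventually_sequentially
  proof
    fix Z
    have "\<not> (\<forall>n. (\<Sum>i<n. d i) \<le> Z)"
      using summableI_nonneg_bounded[of d Z] nonneg \<open>\<not> summable d\<close> by blast
    then obtain N where "Z < (\<Sum>i<N. d i)" by (auto simp: not_le)
    moreover have "(\<Sum>i<N. d i) \<le> (\<Sum>i<n. d i)" if "N \<le> n" for n
      using that nonneg by (intro sum_mono2) auto
    ultimately show "\<exists>N. \<forall>n\<ge>N. Z \<le> (\<Sum>i<n. d i)" by force
  qed
  then have "filterlim (\<lambda>n. - (\<Sum>i<n. d i)) at_bot sequentially"
    by (simp add: filterlim_uminus_at_top)
  then show ?thesis by (rule filterlim_compose[OF exp_at_bot])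
qed

lemma tendsto_0_if_decay_rates_not_summable:
  fixes V d :: "nat \<Rightarrow> real"
  assumes "\<And>n. 0 \<le> V n" and "\<And>n. V (Suc n) \<le> (1 - d n) * V n"
    and "\<And>n. 0 \<le> d n" and "\<not> summable d"
  shows "V \<longlonglongrightarrow> 0"
proof (rule tendsto_sandwich[OF _ _ tendsto_const])
  show "\<forall>\<^sub>F n in sequentially. 0 \<le> V n" using assms(1) by simp
  show "\<forall>\<^sub>F n in sequentially. V n \<le> exp (- (\<Sum>i<n. d i)) * V 0"
    using decay_le_exp_neg_sum[of V d, OF assms(1,2)] by simp
  show "(\<lambda>n. exp (- (\<Sum>i<n. d i)) * V 0) \<longlonglongrightarrow> 0"
    by (rule tendsto_mult_left_zero[OF exp_neg_partial_sums_tendsto_0[OF assms(3,4)]])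
qed

lemma antimono_tendsto_0_at_top:
  fixes V :: "real \<Rightarrow> real" and t :: "nat \<Rightarrow> real"
  assumes antimono: "\<And>r s. 0 \<le> r \<Longrightarrow> r \<le> s \<Longrightarrow> V s \<le> V r"
    and nonneg: "\<And>s. 0 \<le> s \<Longrightarrow> 0 \<le> V s"
    and "\<And>n. 0 \<le> t n" and lim: "(\<lambda>n. V (t n)) \<longlonglongrightarrow> 0"
  shows "(V \<longlongrightarrow> 0) at_top"
  unfolding tendsto_iff eventually_at_top_linorder
proof (intro allI impI)
  fix e :: real assume "0 < e"
  then have "\<exists>N. \<forall>n\<ge>N. \<bar>V (t n)\<bar> < e"
    using lim by (simp add: tendsto_iff eventually_sequentially dist_real_def)
  then obtain n where "\<forall>m\<ge>n. \<bar>V (t m)\<bar> < e" by blast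
  then have "V (t n) < e" by auto
  then have "dist (V s) 0 < e" if "t n \<le> s" for s
    using that antimono[of "t n" s] nonneg[of s] \<open>0 \<le> t n\<close> by auto
  then show "\<exists>N. \<forall>s\<ge>N. dist (V s) 0 < e" by blast
qed

theorem corollary1:
  fixes Q :: "real \<Rightarrow> real^'n^'n" and x :: "real \<Rightarrow> real^'n"
  assumes "\<And>t. t \<ge> 0 \<Longrightarrow> Q t \<in> Qbar"
    and "\<And>b. b \<ge> 0 \<Longrightarrow> riemann_integrable_on Q 0 b"
    and "sufficiently_exciting Q"
    and "is_solution Q x"
  shows "(x \<longlongrightarrow> 0) at_top"
proof -
  interpret Qbar_solution Q x using assms(1,4) by unfold_locales
  obtain \<epsilon> T :: "nat \<Rightarrow> real" where
    \<epsilon>T: "\<And>i. 0 < \<epsilon> i \<and> 0 < T i \<and> \<epsilon> i \<le> sigma_min (integral {(\<Sum>j<i. T j)..(\<Sum>j<i. T j) + T i} Q)"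
    and not_summable: "\<not> summable (\<lambda>i. delta_fn (\<epsilon> i) (T i))"
    using assms(3) unfolding sufficiently_exciting_def by blast
  have delta_nonneg: "0 \<le> delta_fn (\<epsilon> i) (T i)" for i
    using \<epsilon>T[of i] by (simp add: delta_fn_def)
  define t where "t i = (\<Sum>j<i. T j)" for i
  have t_nonneg: "0 \<le> t i" for i unfolding t_def using \<epsilon>T by (intro sum_nonneg) (auto intro: less_imp_le)
  have decay: "(norm (x (t (Suc i))))\<^sup>2 \<le> (1 - delta_fn (\<epsilon> i) (T i)) * (norm (x (t i)))\<^sup>2" for i
    using window_decay[OF t_nonneg _ _ integrable_on_if_riemann_integrable[OF assms(2) t_nonneg]] \<epsilon>T[of i]
    by (simp add: t_def)
  have "(\<lambda>n. (norm (x (t n)))\<^sup>2) \<longlonglongrightarrow> 0"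
    by (rule tendsto_0_if_decay_rates_not_summable[OF _ decay delta_nonneg not_summable]) simp
  then have "((\<lambda>s. (norm (x s))\<^sup>2) \<longlongrightarrow> 0) at_top"
    using norm_antimono by (intro antimono_tendsto_0_at_top[OF _ _ t_nonneg]) simp_all
  then have "((\<lambda>s. norm (x s)) \<longlongrightarrow> 0) at_top" using tendsto_real_sqrt by fastforce
  then show ?thesis by (rule tendsto_norm_zero_cancel)
qed

end
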